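(* Let $G$ be a finite group generated by a set $S$ with $1_G\in S$, let $\gamma$ be an irreducible monomial representation of $G$, and let $A\subset G$ be a normal symmetric set such that $2\operatorname{SpecRad}(\widehat{1_A}(\gamma))>\mathbb{P}_G(S\cdot A)$. Then $\gamma$ is one-dimensional.
   Context: A representation is a homomorphism $\gamma:G\to U_n(\mathbb{C})$; it is monomial if it is induced by a one-dimensional representation of some subgroup $H\le G$ (i.e. its character is the induced character $\lambda^G$ of some homomorphism $\lambda:H\to S^1$). $A$ symmetric means $A=A^{-1}$, normal means $xA=Ax$ for all $x\in G$. $\mathbb{P}_G(E)=|E|/|G|$ and $\mathbb{E}_{x\in G}$ is the average over $G$. The Fourier transform is $\widehat{f}(\gamma):=\mathbb{E}_{x\in G}f(x)\gamma(x)$, and $\operatorname{SpecRad}(M)$ is the largest absolute value of an eigenvalue of the matrix $M$. $S\cdot A=\{sa:s\in S,a\in A\}$. *)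

theory Defs
  imports "HOL-Algebra.Coset" "HOL-Algebra.Generated_Groups"
    "Jordan_Normal_Form.Spectral_Radius" "Jordan_Normal_Form.Schur_Decomposition"
begin

definition unitary_mat :: "nat \<Rightarrow> complex mat \<Rightarrow> bool" where
  "unitary_mat n U \<longleftrightarrow> U \<in> carrier_mat n n \<and> mat_adjoint U * U = 1\<^sub>m n"

definition unitary_rep :: "('g, 'b) monoid_scheme \<Rightarrow> nat \<Rightarrow> ('g \<Rightarrow> complex mat) \<Rightarrow> bool" where
  "unitary_rep G n \<gamma> \<longleftrightarrow>
     (\<forall>x\<in>carrier G. unitary_mat n (\<gamma> x)) \<and>
     (\<forall>x\<in>carrier G. \<forall>y\<in>carrier G. \<gamma> (x \<otimes>\<^bsub>G\<^esub> y) = \<gamma> x * \<gamma> y)"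

definition invariant_subspace :: "('g, 'b) monoid_scheme \<Rightarrow> nat \<Rightarrow> ('g \<Rightarrow> complex mat) \<Rightarrow> complex vec set \<Rightarrow> bool" where
  "invariant_subspace G n \<gamma> W \<longleftrightarrow>
     W \<subseteq> carrier_vec n \<and> 0\<^sub>v n \<in> W \<and>
     (\<forall>v\<in>W. \<forall>w\<in>W. v + w \<in> W) \<and> (\<forall>c. \<forall>v\<in>W. c \<cdot>\<^sub>v v \<in> W) \<and>
     (\<forall>x\<in>carrier G. \<forall>v\<in>W. \<gamma> x *\<^sub>v v \<in> W)"

definition irreducible_rep :: "('g, 'b) monoid_scheme \<Rightarrow> nat \<Rightarrow> ('g \<Rightarrow> complex mat) \<Rightarrow> bool" where
  "irreducible_rep G n \<gamma> \<longleftrightarrow> unitary_rep G n \<gamma> \<and> n > 0 \<and>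
     (\<forall>W. invariant_subspace G n \<gamma> W \<longrightarrow> W = {0\<^sub>v n} \<or> W = carrier_vec n)"

definition mat_trace :: "complex mat \<Rightarrow> complex" where
  "mat_trace M = (\<Sum>i<dim_row M. M $$ (i, i))"

definition induced_char :: "('g, 'b) monoid_scheme \<Rightarrow> 'g set \<Rightarrow> ('g \<Rightarrow> complex) \<Rightarrow> 'g \<Rightarrow> complex" where
  "induced_char G H chi x =
     (1 / of_nat (card H)) *
     (\<Sum>y\<in>carrier G. if inv\<^bsub>G\<^esub> y \<otimes>\<^bsub>G\<^esub> x \<otimes>\<^bsub>G\<^esub> y \<in> H
                     then chi (inv\<^bsub>G\<^esub> y \<otimes>\<^bsub>G\<^esub> x \<otimes>\<^bsub>G\<^esub> y) else 0)"

definition monomial_rep :: "('g, 'b) monoid_scheme \<Rightarrow> nat \<Rightarrow> ('g \<Rightarrow> complex mat) \<Rightarrow> bool" where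
  "monomial_rep G n \<gamma> \<longleftrightarrow>
     (\<exists>H chi. subgroup H G \<and> (\<forall>h\<in>H. cmod (chi h) = 1) \<and>
        (\<forall>a\<in>H. \<forall>b\<in>H. chi (a \<otimes>\<^bsub>G\<^esub> b) = chi a * chi b) \<and>
        (\<forall>x\<in>carrier G. mat_trace (\<gamma> x) = induced_char G H chi x))"

definition fourier :: "('g, 'b) monoid_scheme \<Rightarrow> ('g \<Rightarrow> complex) \<Rightarrow> nat \<Rightarrow> ('g \<Rightarrow> complex mat) \<Rightarrow> complex mat" where
  "fourier G f n \<gamma> = mat n n (\<lambda>(i, j).
     (1 / of_nat (card (carrier G))) * (\<Sum>x\<in>carrier G. f x * \<gamma> x $$ (i, j)))"

end

theory Submission
  imports Defs
begin

text \<open>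
  Since A is a normal set, the Fourier coefficient F of its indicator commutes with the
  irreducible representation \<gamma>, so by Schur's lemma F is a scalar \<mu>. Taking traces and
  using that the character of \<gamma> is induced from a unitary character \<lambda> of a subgroup H
  of index n shows that n\<mu> is n/|G| times the sum of \<lambda> over A \<inter> H, hence
  SpecRad(F) \<le> |A \<inter> H| / |G|. If n > 1 then H is proper, so some generator s \<in> S lies
  outside H, and A \<inter> H and s(A \<inter> H) are disjoint subsets of S A; thus
  2 |A \<inter> H| \<le> |S A|, contradicting the hypothesis.
\<close>

definition class_fun :: "('g, 'b) monoid_scheme \<Rightarrow> ('g \<Rightarrow> 'c) \<Rightarrow> bool" where
  "class_fun G f \<longleftrightarrow> (\<forall>g\<in>carrier G. \<forall>x\<in>carrier G. f (inv\<^bsub>G\<^esub> g \<otimes>\<^bsub>G\<^esub> x \<otimes>\<^bsub>G\<^esub> g) = f x)"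

lemma (in group) sum_carrier_conj:
  assumes "g \<in> carrier G"
  shows "(\<Sum>x\<in>carrier G. h (inv g \<otimes> x \<otimes> g)) = (\<Sum>x\<in>carrier G. h x)"
  by (rule sum.reindex_bij_witness[where j = "\<lambda>x. inv g \<otimes> x \<otimes> g" and i = "\<lambda>x. g \<otimes> x \<otimes> inv g"])
    (use assms in \<open>auto simp: m_assoc, auto simp: m_assoc[symmetric]\<close>)

lemma (in group) class_fun_indicator_normal_set:
  assumes "A \<subseteq> carrier G" and "\<forall>x\<in>carrier G. x <# A = A #> x"
  shows "class_fun G (\<lambda>x. of_bool (x \<in> A))"
  unfolding class_fun_def
proof (intro ballI)
  fix g x assume g: "g \<in> carrier G" and x: "x \<in> carrier G"
  have conj_mem: "inv h \<otimes> y \<otimes> h \<in> A" if h: "h \<in> carrier G" and y: "y \<in> A" for h y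
  proof -
    have "inv h \<otimes> y \<in> A #> inv h"
      using assms h y unfolding l_coset_def by (metis UN_iff inv_closed singletonI)
    then obtain a where "a \<in> A" "inv h \<otimes> y = a \<otimes> inv h"
      unfolding r_coset_def by auto
    with h assms show ?thesis by (auto simp: m_assoc subsetD)
  qed
  have "x = inv (inv g) \<otimes> (inv g \<otimes> x \<otimes> g) \<otimes> inv g"
    using g x by (simp add: m_assoc) (simp add: m_assoc[symmetric])
  then have "inv g \<otimes> x \<otimes> g \<in> A \<Longrightarrow> x \<in> A"
    using conj_mem[of "inv g"] g by (metis inv_closed)
  with conj_mem[OF g] show "of_bool (inv g \<otimes> x \<otimes> g \<in> A) = of_bool (x \<in> A)"
    by auto
qed

lemma unitary_rep_carrier_mat:
  "unitary_rep G n \<gamma> \<Longrightarrow> x \<in> carrier G \<Longrightarrow> \<gamma> x \<in> carrier_mat n n"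
  unfolding unitary_rep_def unitary_mat_def by auto

lemma irreducible_rep_unitary_rep: "irreducible_rep G n \<gamma> \<Longrightarrow> unitary_rep G n \<gamma>"
  by (simp add: irreducible_rep_def)

lemma unitary_rep_one:
  fixes G (structure)
  assumes "group G" and rep: "unitary_rep G n \<gamma>"
  shows "\<gamma> \<one>\<^bsub>G\<^esub> = 1\<^sub>m n"
proof -
  interpret group G by fact
  define U where "U = \<gamma> \<one>"
  have U: "U \<in> carrier_mat n n" "mat_adjoint U * U = 1\<^sub>m n"
    using rep unfolding unitary_rep_def unitary_mat_def U_def by auto
  \<comment> \<open>An idempotent unitary matrix is the identity.\<close>
  have idem: "U * U = U"
    using rep unfolding unitary_rep_def U_def by (metis one_closed l_one)
  have adj: "mat_adjoint U \<in> carrier_mat n n"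
    using U(1) mat_of_rows_carrier(1)[of n "map conjugate (cols U)"] by (simp add: mat_adjoint_def)
  have "1\<^sub>m n = mat_adjoint U * (U * U)" using U(2) idem by simp
  also have "\<dots> = (mat_adjoint U * U) * U" using adj U(1) by simp
  also have "\<dots> = U" using U by simp
  finally show ?thesis unfolding U_def by simp
qed

lemma irreducible_rep_commuting_eigenvalue_scalar:
  assumes irr: "irreducible_rep G n \<gamma>" and M: "M \<in> carrier_mat n n"
    and comm: "\<And>g. g \<in> carrier G \<Longrightarrow> \<gamma> g * M = M * \<gamma> g" and ev: "eigenvalue M \<mu>"
  shows "M = \<mu> \<cdot>\<^sub>m 1\<^sub>m n"
proof -
  have \<gamma>: "\<And>x. x \<in> carrier G \<Longrightarrow> \<gamma> x \<in> carrier_mat n n"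
    using unitary_rep_carrier_mat[OF irreducible_rep_unitary_rep[OF irr]] .
  define W where "W = {v \<in> carrier_vec n. M *\<^sub>v v = \<mu> \<cdot>\<^sub>v v}"
  have "invariant_subspace G n \<gamma> W"
    unfolding invariant_subspace_def
  proof (intro conjI ballI allI)
    show "W \<subseteq> carrier_vec n" and "0\<^sub>v n \<in> W"
      unfolding W_def using M by auto
    fix v assume "v \<in> W"
    then have v: "v \<in> carrier_vec n" and Mv: "M *\<^sub>v v = \<mu> \<cdot>\<^sub>v v"
      unfolding W_def by auto
    show "c \<cdot>\<^sub>v v \<in> W" for c
      using M v Mv by (simp add: W_def mult_mat_vec smult_smult_assoc mult.commute)
    show "v + u \<in> W" if "u \<in> W" for u
      using that M v Mv by (simp add: W_def mult_add_distrib_mat_vec smult_add_distrib_vec)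
    show "\<gamma> x *\<^sub>v v \<in> W" if x: "x \<in> carrier G" for x
    proof -
      have "M *\<^sub>v (\<gamma> x *\<^sub>v v) = \<gamma> x *\<^sub>v (M *\<^sub>v v)"
        using M \<gamma>[OF x] v comm[OF x] by (metis assoc_mult_mat_vec)
      then show ?thesis
        using \<gamma>[OF x] v Mv by (simp add: W_def mult_mat_vec)
    qed
  qed
  then have "W = {0\<^sub>v n} \<or> W = carrier_vec n"
    using irr[unfolded irreducible_rep_def] by blast
  moreover obtain w where "w \<in> W" "w \<noteq> 0\<^sub>v n"
    using ev M unfolding eigenvalue_def eigenvector_def W_def by auto
  ultimately have "W = carrier_vec n"
    by blast
  then have eigen: "\<forall>v\<in>carrier_vec n. M *\<^sub>v v = \<mu> \<cdot>\<^sub>v v"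
    unfolding W_def by blast
  show ?thesis
  proof (rule eq_matI)
    fix i j assume "i < dim_row (\<mu> \<cdot>\<^sub>m 1\<^sub>m n)" "j < dim_col (\<mu> \<cdot>\<^sub>m 1\<^sub>m n)"
    then have ij: "i < n" "j < n" by simp_all
    have "M $$ (i, j) = (M *\<^sub>v unit_vec n j) $ i"
      using M ij by simp
    also have "\<dots> = (\<mu> \<cdot>\<^sub>m 1\<^sub>m n) $$ (i, j)"
      using eigen ij by simp
    finally show "M $$ (i, j) = (\<mu> \<cdot>\<^sub>m 1\<^sub>m n) $$ (i, j)" .
  qed (use M in simp_all)
qed

lemma mult_fourier:
  assumes M: "M \<in> carrier_mat n n" and \<gamma>: "\<And>x. x \<in> carrier G \<Longrightarrow> \<gamma> x \<in> carrier_mat n n"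
  shows "M * fourier G f n \<gamma> = fourier G f n (\<lambda>x. M * \<gamma> x)"
proof (rule eq_matI)
  fix i j assume "i < dim_row (fourier G f n (\<lambda>x. M * \<gamma> x))"
    "j < dim_col (fourier G f n (\<lambda>x. M * \<gamma> x))"
  then have ij: "i < n" "j < n" by (simp_all add: fourier_def)
  have "(M * fourier G f n \<gamma>) $$ (i, j)
      = (\<Sum>k<n. M $$ (i, k) * (1 / of_nat (card (carrier G)) * (\<Sum>x\<in>carrier G. f x * \<gamma> x $$ (k, j))))"
    using M ij by (simp add: fourier_def scalar_prod_def lessThan_atLeast0)
  also have "\<dots> = 1 / of_nat (card (carrier G)) * (\<Sum>x\<in>carrier G. f x * (\<Sum>k<n. M $$ (i, k) * \<gamma> x $$ (k, j)))"
    by (simp add: sum_distrib_left sum.swap[of _ "carrier G"] algebra_simps)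
  also have "\<dots> = fourier G f n (\<lambda>x. M * \<gamma> x) $$ (i, j)"
  proof -
    have "(M * \<gamma> x) $$ (i, j) = (\<Sum>k<n. M $$ (i, k) * \<gamma> x $$ (k, j))" if "x \<in> carrier G" for x
      using M \<gamma>[OF that] ij by (simp add: scalar_prod_def lessThan_atLeast0)
    then show ?thesis using ij by (simp add: fourier_def)
  qed
  finally show "(M * fourier G f n \<gamma>) $$ (i, j) = fourier G f n (\<lambda>x. M * \<gamma> x) $$ (i, j)" .
qed (use M in \<open>simp_all add: fourier_def\<close>)

lemma fourier_mult:
  assumes M: "M \<in> carrier_mat n n" and \<gamma>: "\<And>x. x \<in> carrier G \<Longrightarrow> \<gamma> x \<in> carrier_mat n n"
  shows "fourier G f n \<gamma> * M = fourier G f n (\<lambda>x. \<gamma> x * M)"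
proof (rule eq_matI)
  fix i j assume "i < dim_row (fourier G f n (\<lambda>x. \<gamma> x * M))"
    "j < dim_col (fourier G f n (\<lambda>x. \<gamma> x * M))"
  then have ij: "i < n" "j < n" by (simp_all add: fourier_def)
  have "(fourier G f n \<gamma> * M) $$ (i, j)
      = (\<Sum>k<n. (1 / of_nat (card (carrier G)) * (\<Sum>x\<in>carrier G. f x * \<gamma> x $$ (i, k))) * M $$ (k, j))"
    using M ij by (simp add: fourier_def scalar_prod_def lessThan_atLeast0)
  also have "\<dots> = 1 / of_nat (card (carrier G)) * (\<Sum>x\<in>carrier G. f x * (\<Sum>k<n. \<gamma> x $$ (i, k) * M $$ (k, j)))"
    by (simp add: sum_distrib_left sum_distrib_right sum.swap[of _ "carrier G"] algebra_simps)
  also have "\<dots> = fourier G f n (\<lambda>x. \<gamma> x * M) $$ (i, j)"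
  proof -
    have "(\<gamma> x * M) $$ (i, j) = (\<Sum>k<n. \<gamma> x $$ (i, k) * M $$ (k, j))" if "x \<in> carrier G" for x
      using M \<gamma>[OF that] ij by (simp add: scalar_prod_def lessThan_atLeast0)
    then show ?thesis using ij by (simp add: fourier_def)
  qed
  finally show "(fourier G f n \<gamma> * M) $$ (i, j) = fourier G f n (\<lambda>x. \<gamma> x * M) $$ (i, j)" .
qed (use M in \<open>simp_all add: fourier_def\<close>)

lemma fourier_class_fun_commute:
  fixes G (structure)
  assumes "group G" and rep: "unitary_rep G n \<gamma>" and f: "class_fun G f" and g: "g \<in> carrier G"
  shows "\<gamma> g * fourier G f n \<gamma> = fourier G f n \<gamma> * \<gamma> g"
proof -
  interpret group G by fact
  have hom: "\<And>x y. x \<in> carrier G \<Longrightarrow> y \<in> carrier G \<Longrightarrow> \<gamma> (x \<otimes> y) = \<gamma> x * \<gamma> y"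
    using rep unfolding unitary_rep_def by auto
  have "(\<Sum>x\<in>carrier G. f x * \<gamma> (g \<otimes> x) $$ (i, j)) = (\<Sum>x\<in>carrier G. f x * \<gamma> (x \<otimes> g) $$ (i, j))"
    for i j
  proof -
    \<comment> \<open>Substitute x := g x g\<inverse> and use that f is a class function.\<close>
    have "(\<Sum>x\<in>carrier G. f x * \<gamma> (x \<otimes> g) $$ (i, j))
        = (\<Sum>x\<in>carrier G. f (inv (inv g) \<otimes> x \<otimes> inv g) * \<gamma> (inv (inv g) \<otimes> x \<otimes> inv g \<otimes> g) $$ (i, j))"
      using g by (intro sum_carrier_conj[symmetric]) simp
    also have "\<dots> = (\<Sum>x\<in>carrier G. f x * \<gamma> (g \<otimes> x) $$ (i, j))"
    proof (intro sum.cong refl)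
      fix x assume x: "x \<in> carrier G"
      have "f (inv (inv g) \<otimes> x \<otimes> inv g) = f x"
        using f g x unfolding class_fun_def by blast
      moreover have "inv (inv g) \<otimes> x \<otimes> inv g \<otimes> g = g \<otimes> x"
        using g x by (simp add: m_assoc)
      ultimately show "f (inv (inv g) \<otimes> x \<otimes> inv g) * \<gamma> (inv (inv g) \<otimes> x \<otimes> inv g \<otimes> g) $$ (i, j)
          = f x * \<gamma> (g \<otimes> x) $$ (i, j)" by simp
    qed
    finally show ?thesis by simp
  qed
  then have "fourier G f n (\<lambda>x. \<gamma> g * \<gamma> x) = fourier G f n (\<lambda>x. \<gamma> x * \<gamma> g)"
    using g by (simp add: fourier_def hom[symmetric] cong: sum.cong)
  then show ?thesis
    using g unitary_rep_carrier_mat[OF rep] by (simp add: mult_fourier fourier_mult)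
qed

lemma mat_trace_smult_one: "mat_trace (\<mu> \<cdot>\<^sub>m 1\<^sub>m n) = of_nat n * \<mu>"
  by (simp add: mat_trace_def)

lemma mat_trace_fourier:
  assumes "\<And>x. x \<in> carrier G \<Longrightarrow> \<gamma> x \<in> carrier_mat n n"
  shows "mat_trace (fourier G f n \<gamma>)
    = 1 / of_nat (card (carrier G)) * (\<Sum>x\<in>carrier G. f x * mat_trace (\<gamma> x))"
proof -
  have "mat_trace (fourier G f n \<gamma>)
      = (\<Sum>i<n. 1 / of_nat (card (carrier G)) * (\<Sum>x\<in>carrier G. f x * \<gamma> x $$ (i, i)))"
    by (simp add: mat_trace_def fourier_def)
  also have "\<dots> = 1 / of_nat (card (carrier G)) * (\<Sum>x\<in>carrier G. \<Sum>i<n. f x * \<gamma> x $$ (i, i))"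
    by (subst sum.swap) (simp add: sum_distrib_left)
  also have "\<dots> = 1 / of_nat (card (carrier G)) * (\<Sum>x\<in>carrier G. f x * mat_trace (\<gamma> x))"
  proof -
    have "mat_trace (\<gamma> x) = (\<Sum>i<n. \<gamma> x $$ (i, i))" if "x \<in> carrier G" for x
      using assms[OF that] by (simp add: mat_trace_def)
    then show ?thesis by (simp add: sum_distrib_left)
  qed
  finally show ?thesis .
qed

lemma (in group) induced_char_one:
  assumes "subgroup H G" and "chi \<one> = 1"
  shows "induced_char G H chi \<one> = of_nat (card (carrier G)) / of_nat (card H)"
  using assms by (simp add: induced_char_def subgroup.one_closed)

lemma (in group) sum_class_fun_induced_char:
  assumes fin: "finite (carrier G)" and H: "subgroup H G" and f: "class_fun G f"
  shows "(\<Sum>x\<in>carrier G. f x * induced_char G H chi x)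
    = of_nat (card (carrier G)) / of_nat (card H) * (\<Sum>x\<in>H. f x * chi x)"
proof -
  define h where "h x = (if x \<in> H then f x * chi x else 0)" for x
  have "(\<Sum>x\<in>carrier G. f x * induced_char G H chi x)
      = 1 / of_nat (card H) * (\<Sum>x\<in>carrier G. \<Sum>y\<in>carrier G. h (inv y \<otimes> x \<otimes> y))"
  proof -
    have "f x * (if inv y \<otimes> x \<otimes> y \<in> H then chi (inv y \<otimes> x \<otimes> y) else 0) = h (inv y \<otimes> x \<otimes> y)"
      if "x \<in> carrier G" "y \<in> carrier G" for x y
      using f that unfolding h_def class_fun_def by auto
    then show ?thesis
      unfolding induced_char_def by (simp add: sum_distrib_left mult.left_commute cong: sum.cong)
  qed
  also have "\<dots> = 1 / of_nat (card H) * (\<Sum>y\<in>carrier G. \<Sum>x\<in>carrier G. h x)"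
    by (subst sum.swap) (simp add: sum_carrier_conj)
  also have "(\<Sum>x\<in>carrier G. h x) = (\<Sum>x\<in>H. f x * chi x)"
    using fin subgroup.subset[OF H] unfolding h_def
    by (simp add: sum.inter_restrict[symmetric] Int_absorb1)
  finally show ?thesis by simp
qed

lemma induced_degree_eq_index:
  fixes G (structure)
  assumes "group G" and rep: "unitary_rep G n \<gamma>" and H: "subgroup H G" and chi: "chi \<one>\<^bsub>G\<^esub> = 1"
    and tr: "\<forall>x\<in>carrier G. mat_trace (\<gamma> x) = induced_char G H chi x"
  shows "(of_nat n :: complex) = of_nat (card (carrier G)) / of_nat (card H)"
proof -
  interpret group G by fact
  have "of_nat n = mat_trace (\<gamma> \<one>)"
    using unitary_rep_one[OF \<open>group G\<close> rep] by (simp add: mat_trace_def)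
  also have "\<dots> = of_nat (card (carrier G)) / of_nat (card H)"
    using tr induced_char_one[of H chi, OF H chi] by simp
  finally show ?thesis .
qed

lemma spectral_radius_fourier_class_fun:
  assumes "group G" and fin: "finite (carrier G)" and irr: "irreducible_rep G n \<gamma>"
    and f: "class_fun G f" and H: "subgroup H G" and chi: "chi \<one>\<^bsub>G\<^esub> = 1"
    and tr: "\<forall>x\<in>carrier G. mat_trace (\<gamma> x) = induced_char G H chi x"
  shows "spectral_radius (fourier G f n \<gamma>) = cmod (\<Sum>x\<in>H. f x * chi x) / real (card (carrier G))"
proof -
  interpret group G by fact
  define F where "F = fourier G f n \<gamma>"
  have rep: "unitary_rep G n \<gamma>"
    using irr by (rule irreducible_rep_unitary_rep)
  have \<gamma>: "\<And>x. x \<in> carrier G \<Longrightarrow> \<gamma> x \<in> carrier_mat n n"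
    using unitary_rep_carrier_mat[OF rep] .
  have "n > 0"
    using irr by (simp add: irreducible_rep_def)
  have F: "F \<in> carrier_mat n n"
    unfolding F_def fourier_def by simp
  obtain \<mu> where ev: "eigenvalue F \<mu>" and sr: "spectral_radius F = cmod \<mu>"
    using spectral_radius_mem_max(1)[OF F \<open>n > 0\<close>] unfolding spectrum_def by auto
  have "F = \<mu> \<cdot>\<^sub>m 1\<^sub>m n"
    by (rule irreducible_rep_commuting_eigenvalue_scalar[OF irr F _ ev])
      (simp add: F_def fourier_class_fun_commute[OF \<open>group G\<close> rep f])
  then have "of_nat n * \<mu> = mat_trace F"
    by (simp add: mat_trace_smult_one)
  also have "\<dots> = 1 / of_nat (card (carrier G)) * (\<Sum>x\<in>carrier G. f x * induced_char G H chi x)"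
    using mat_trace_fourier[where G = G and \<gamma> = \<gamma> and f = f, OF \<gamma>] tr by (simp add: F_def)
  also have "\<dots> = of_nat n * ((\<Sum>x\<in>H. f x * chi x) / of_nat (card (carrier G)))"
    using sum_class_fun_induced_char[OF fin H f] induced_degree_eq_index[OF \<open>group G\<close> rep H chi tr] by simp
  finally have "\<mu> = (\<Sum>x\<in>H. f x * chi x) / of_nat (card (carrier G))"
    using \<open>n > 0\<close> by (metis mult_cancel_left of_nat_eq_0_iff not_gr0)
  then show ?thesis
    using sr unfolding F_def by (simp add: norm_divide)
qed

lemma (in group) unit_char_one:
  assumes H: "subgroup H G" and unit: "\<forall>h\<in>H. cmod (chi h) = 1"
    and mult: "\<forall>a\<in>H. \<forall>b\<in>H. chi (a \<otimes> b) = chi a * chi b"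
  shows "chi \<one> = 1"
proof -
  have "chi \<one> * chi \<one> = chi \<one> * 1" and "chi \<one> \<noteq> 0"
    using mult unit subgroup.one_closed[OF H] by force+
  then show ?thesis
    by (rule mult_left_cancel[THEN iffD1, rotated])
qed

lemma (in group) spectral_radius_fourier_normal_set_le:
  assumes fin: "finite (carrier G)" and irr: "irreducible_rep G n \<gamma>"
    and A: "A \<subseteq> carrier G" "\<forall>x\<in>carrier G. x <# A = A #> x"
    and H: "subgroup H G" and unit: "\<forall>h\<in>H. cmod (chi h) = 1" and chi: "chi \<one> = 1"
    and tr: "\<forall>x\<in>carrier G. mat_trace (\<gamma> x) = induced_char G H chi x"
  shows "spectral_radius (fourier G (\<lambda>x. of_bool (x \<in> A)) n \<gamma>)
    \<le> real (card (A \<inter> H)) / real (card (carrier G))"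
proof -
  have "cmod (\<Sum>x\<in>H. of_bool (x \<in> A) * chi x) \<le> (\<Sum>x\<in>H. cmod (of_bool (x \<in> A) * chi x))"
    by (rule norm_sum)
  also have "\<dots> = (\<Sum>x\<in>H. of_bool (x \<in> A))"
    using unit by (intro sum.cong) (auto simp: norm_mult)
  also have "\<dots> = real (card (A \<inter> H))"
    using finite_subset[OF subgroup.subset[OF H] fin] by (simp add: Int_commute Collect_mem_eq)
  finally show ?thesis
    using spectral_radius_fourier_class_fun[OF is_group fin irr class_fun_indicator_normal_set[OF A] H chi tr]
    by (simp add: divide_right_mono)
qed

lemma (in group) two_card_inter_subgroup_le_card_set_mult:
  assumes fin: "finite (carrier G)" and A: "A \<subseteq> carrier G" and S: "S \<subseteq> carrier G"
    and one: "\<one> \<in> S" and H: "subgroup H G" and s: "s \<in> S" "s \<notin> H"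
  shows "2 * card (A \<inter> H) \<le> card (S <#> A)"
proof -
  have sG: "s \<in> carrier G" using s S by auto
  have "A \<inter> H \<subseteq> S <#> A"
    using one A unfolding set_mult_def by force
  moreover have "(\<otimes>) s ` (A \<inter> H) \<subseteq> S <#> A"
    using s unfolding set_mult_def by blast
  moreover have "A \<inter> H \<inter> (\<otimes>) s ` (A \<inter> H) = {}"
  proof (rule ccontr)
    assume "A \<inter> H \<inter> (\<otimes>) s ` (A \<inter> H) \<noteq> {}"
    then obtain a where a: "a \<in> H" "s \<otimes> a \<in> H" by auto
    then have "s \<otimes> a \<otimes> inv a \<in> H"
      using H by (simp add: subgroup.m_closed subgroup.m_inv_closed)
    then show False
      using a sG subgroup.subset[OF H] s by (auto simp: m_assoc)
  qed
  moreover have "inj_on ((\<otimes>) s) (A \<inter> H)"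
    by (rule inj_onI) (use A sG in \<open>auto simp: subsetD\<close>)
  moreover have "finite (S <#> A)"
    using fin A S by (auto intro: finite_subset simp: set_mult_def)
  ultimately show ?thesis
    using card_Un_disjoint[of "A \<inter> H" "(\<otimes>) s ` (A \<inter> H)"] card_image
      card_mono[of "S <#> A" "A \<inter> H \<union> (\<otimes>) s ` (A \<inter> H)"]
    by (metis Un_least finite_Int fin A finite_subset card_image mult_2)
qed

theorem lemma6p2:
  fixes G :: "('g, 'b) monoid_scheme" and S A :: "'g set"
    and \<gamma> :: "'g \<Rightarrow> complex mat" and n :: nat
  assumes "group G" and "finite (carrier G)"
    and "S \<subseteq> carrier G" and "generate G S = carrier G" and "\<one>\<^bsub>G\<^esub> \<in> S"
    and "irreducible_rep G n \<gamma>" and "monomial_rep G n \<gamma>"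
    and "A \<subseteq> carrier G"
    and "(\<lambda>a. inv\<^bsub>G\<^esub> a) ` A = A"
    and "\<forall>x\<in>carrier G. x <#\<^bsub>G\<^esub> A = A #>\<^bsub>G\<^esub> x"
    and "2 * spectral_radius (fourier G (\<lambda>x. of_bool (x \<in> A)) n \<gamma>)
           > real (card (S <#>\<^bsub>G\<^esub> A)) / real (card (carrier G))"
  shows "n = 1"
proof (rule ccontr)
  assume "n \<noteq> 1"
  interpret group G by fact
  obtain H chi where H: "subgroup H G" and unit: "\<forall>h\<in>H. cmod (chi h) = 1"
    and mult: "\<forall>a\<in>H. \<forall>b\<in>H. chi (a \<otimes>\<^bsub>G\<^esub> b) = chi a * chi b"
    and tr: "\<forall>x\<in>carrier G. mat_trace (\<gamma> x) = induced_char G H chi x"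
    using \<open>monomial_rep G n \<gamma>\<close> unfolding monomial_rep_def by blast
  have chi: "chi \<one>\<^bsub>G\<^esub> = 1"
    using H unit mult by (rule unit_char_one)
  have "H \<noteq> carrier G"
  proof
    assume "H = carrier G"
    then have "(of_nat n :: complex) = 1"
      using induced_degree_eq_index[OF \<open>group G\<close> irreducible_rep_unitary_rep[OF assms(6)] H chi tr]
        assms(2) carrier_not_empty by simp
    with \<open>n \<noteq> 1\<close> show False by simp
  qed
  then obtain s where s: "s \<in> S" "s \<notin> H"
    using generate_subgroup_incl[OF _ H] assms(4) subgroup.subset[OF H] by blast
  have "2 * spectral_radius (fourier G (\<lambda>x. of_bool (x \<in> A)) n \<gamma>)
      \<le> real (2 * card (A \<inter> H)) / real (card (carrier G))"
    using spectral_radius_fourier_normal_set_le[OF assms(2,6,8,10) H unit chi tr] by simp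
  also have "\<dots> \<le> real (card (S <#>\<^bsub>G\<^esub> A)) / real (card (carrier G))"
    using two_card_inter_subgroup_le_card_set_mult[OF assms(2,8,3,5) H s]
    by (simp add: divide_right_mono)
  finally show False
    using assms(11) by simp
qed

end
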